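(* Let $G$ be an abelian Polish group, let $P\subseteq G$ be a perfect set and let $C\subseteq G$ be a comeager set. Then there exists $g\in G$ such that $|C\cap (g+P)|=\mathfrak{c}$.
   Context: $\mathfrak c$ denotes the cardinality of the continuum. *)

theory Defs
  imports "HOL-Analysis.Analysis" "HOL-Library.Equipollence"
begin

definition perfect_set :: "'a::topological_space set \<Rightarrow> bool" where
  "perfect_set P \<longleftrightarrow> closed P \<and> (\<forall>x\<in>P. x islimpt P)"

definition nowhere_dense :: "'a::topological_space set \<Rightarrow> bool" where
  "nowhere_dense S \<longleftrightarrow> interior (closure S) = {}"

definition meager :: "'a::topological_space set \<Rightarrow> bool" where
  "meager S \<longleftrightarrow> (\<exists>F. countable F \<and> (\<forall>N\<in>F. nowhere_dense N) \<and> S \<subseteq> \<Union>F)"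

definition comeager :: "'a::topological_space set \<Rightarrow> bool" where
  "comeager C \<longleftrightarrow> meager (- C)"

end

theory Submission
  imports Defs
begin

text \<open>
  Cover \<open>- C\<close> by countably many closed nowhere dense sets \<open>N\<close> and pick a countable dense
  \<open>D \<subseteq> P\<close>. By Baire's theorem the countably many closed nowhere dense translates
  \<open>N - d\<close> (\<open>d \<in> D\<close>) do not cover the group, which yields \<open>g\<close> with \<open>g + d\<close> outside every \<open>N\<close>.
  The points \<open>p \<in> P\<close> with \<open>g + p\<close> outside every \<open>N\<close> form a \<open>G\<^sub>\<delta>\<close> subset \<open>S\<close> of the
  closed set \<open>P\<close>, hence a Polish space; it contains \<open>D\<close>, so it is dense in the perfect set
  \<open>P\<close> and has no isolated points. A nonempty perfect Polish space has at least
  continuum many points, and \<open>g + S \<subseteq> C \<inter> (g + P)\<close>. Conversely a second countable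
  \<open>T\<^sub>1\<close> space injects into the subsets of \<open>\<nat>\<close> via a countable basis.
\<close>

lemma UNIV_lepoll_real_if_second_countable:
  "(UNIV :: 'a::{second_countable_topology, t1_space} set) \<lesssim> (UNIV :: real set)"
proof -
  obtain B :: "'a set set" where B: "countable B" "topological_basis B"
    using ex_countable_basis by blast
  define h where "h x = {n. x \<in> from_nat_into B n}" for x
  have "inj h"
  proof (rule injI, rule ccontr)
    fix x y assume "h x = h y" "x \<noteq> y"
    then obtain U where "open U" "x \<in> U" "y \<notin> U"
      by (meson t1_space)
    then obtain b where b: "b \<in> B" "x \<in> b" "b \<subseteq> U"
      by (meson B(2) topological_basisE)
    then obtain n where "from_nat_into B n = b"
      using from_nat_into_surj[OF B(1)] by metis
    then have "n \<in> h x" "n \<notin> h y"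
      using b \<open>y \<notin> U\<close> by (auto simp: h_def)
    with \<open>h x = h y\<close> show False by simp
  qed
  then have "(UNIV :: 'a set) \<lesssim> (UNIV :: nat set set)"
    unfolding lepoll_def by blast
  also have "\<dots> \<approx> (UNIV :: real set)"
    by (rule nat_sets_eqpoll_reals)
  finally show ?thesis .
qed

lemma countable_dense_subset:
  fixes P :: "'a::second_countable_topology set"
  obtains D where "countable D" "D \<subseteq> P" "P \<subseteq> closure D"
proof -
  obtain B :: "'a set set" where B: "countable B" "topological_basis B"
    using ex_countable_basis by blast
  define pick where "pick b = (SOME x. x \<in> b \<inter> P)" for b
  define D where "D = pick ` {b\<in>B. b \<inter> P \<noteq> {}}"
  have pick: "pick b \<in> b \<inter> P" if "b \<inter> P \<noteq> {}" for b
    unfolding pick_def using that by (metis ex_in_conv someI_ex)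
  have "countable D"
    unfolding D_def using B(1) by simp
  moreover have "D \<subseteq> P"
    unfolding D_def using pick by blast
  moreover have "P \<subseteq> closure D"
  proof (intro subsetI, unfold closure_iff_nhds_not_empty, intro allI impI)
    fix x A W assume "x \<in> P" "W \<subseteq> A" "open W" "x \<in> W"
    then obtain b where b: "b \<in> B" "x \<in> b" "b \<subseteq> W"
      by (meson B(2) topological_basisE)
    then have "pick b \<in> D \<inter> W"
      using pick[of b] \<open>x \<in> P\<close> unfolding D_def by blast
    then show "D \<inter> A \<noteq> {}"
      using \<open>W \<subseteq> A\<close> by blast
  qed
  ultimately show ?thesis
    using that by blast
qed

lemma meager_imp_closed_nowhere_dense_cover:
  assumes "meager A"
  obtains F where "countable F" "\<And>N. N \<in> F \<Longrightarrow> closed N \<and> nowhere_dense N" "A \<subseteq> \<Union>F"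
proof -
  obtain F where F: "countable F" "\<And>N. N \<in> F \<Longrightarrow> nowhere_dense N" "A \<subseteq> \<Union>F"
    using assms unfolding meager_def by blast
  moreover have "A \<subseteq> \<Union>(closure ` F)"
    using F(3) closure_subset by blast
  ultimately show ?thesis
    by (intro that[of "closure ` F"]) (auto simp: nowhere_dense_def)
qed

lemma Union_closed_nowhere_dense_neq_UNIV:
  fixes F :: "'a::complete_space set set"
  assumes "countable F" "\<And>N. N \<in> F \<Longrightarrow> closed N \<and> nowhere_dense N"
  shows "\<Union>F \<noteq> UNIV"
proof -
  have "interior N = {}" if "N \<in> F" for N
    using assms(2)[OF that] by (metis nowhere_dense_def closure_closed)
  then have "euclidean interior_of \<Union>F = {}"
    using assms completely_metrizable_space_euclidean by (intro Baire_category_alt) auto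
  then show ?thesis
    by auto
qed

lemma closed_nowhere_dense_translation_vimage:
  fixes N :: "'a::topological_group_add set"
  assumes "closed N" "nowhere_dense N"
  shows "closed ((\<lambda>x. x + d) -` N) \<and> nowhere_dense ((\<lambda>x. x + d) -` N)"
proof
  show closed: "closed ((\<lambda>x. x + d) -` N)"
    by (intro continuous_closed_vimage assms(1) continuous_intros)
  have "interior ((\<lambda>x. x + d) -` N) = {}"
  proof -
    let ?W = "(\<lambda>x. x - d) -` interior ((\<lambda>x. x + d) -` N)"
    have "open ?W"
      by (intro continuous_open_vimage open_interior continuous_intros)
    moreover have "?W \<subseteq> N"
      using interior_subset by fastforce
    ultimately have "?W = {}"
      using assms by (metis closure_closed interior_maximal nowhere_dense_def subset_empty)
    then show ?thesis
      by (metis add_diff_cancel vimage_eq equals0I empty_iff)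
  qed
  then show "nowhere_dense ((\<lambda>x. x + d) -` N)"
    using closed by (simp add: nowhere_dense_def)
qed

lemma completely_metrizable_space_closed_Diff_Union_closed:
  fixes P :: "'a::complete_space set"
  assumes "closed P" "countable F" "\<And>N. N \<in> F \<Longrightarrow> closed N"
  shows "completely_metrizable_space (top_of_set (P - \<Union>F))"
proof -
  have "gdelta_in euclidean (P - \<Union>F)"
  proof -
    have "gdelta_in euclidean (\<Inter>N\<in>insert {} F. - N)"
      using assms by (intro gdelta_in_Inter open_imp_gdelta_in) auto
    moreover have "gdelta_in euclidean P"
      using assms(1) by (simp add: closed_imp_gdelta_in metrizable_space_euclidean)
    moreover have "P - \<Union>F = P \<inter> (\<Inter>N\<in>insert {} F. - N)"
      by auto
    ultimately show ?thesis
      by (simp add: gdelta_in_Int)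
  qed
  then show ?thesis
    using completely_metrizable_space_euclidean completely_metrizable_space_gdelta_in by blast
qed

lemma derived_set_of_self_if_dense_in_perfect:
  fixes P S D :: "'a::metric_space set"
  assumes "\<And>x. x \<in> P \<Longrightarrow> x islimpt P" "D \<subseteq> S" "S \<subseteq> P" "P \<subseteq> closure D"
  shows "top_of_set S derived_set_of S = S"
proof -
  have "x islimpt S" if "x \<in> S" for x
    using assms that by (metis islimpt_subset limpt_of_closure subsetD)
  then show ?thesis
    by (fastforce simp: derived_set_of_subtopology in_derived_set_of islimpt_def)
qed

lemma real_lepoll_perfect_set_Diff_Union_closed:
  fixes P :: "'a::polish_space set"
  assumes "perfect_set P" "countable F" "\<And>N. N \<in> F \<Longrightarrow> closed N"
    and "D \<subseteq> P - \<Union>F" "P \<subseteq> closure D" "P \<noteq> {}"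
  shows "(UNIV :: real set) \<lesssim> P - \<Union>F"
proof (rule lepoll_perfect_set)
  show "completely_metrizable_space (top_of_set (P - \<Union>F)) \<or>
        locally_compact_space (top_of_set (P - \<Union>F)) \<and> Hausdorff_space (top_of_set (P - \<Union>F))"
    using assms(1-3) unfolding perfect_set_def
    by (simp add: completely_metrizable_space_closed_Diff_Union_closed)
  show "top_of_set (P - \<Union>F) derived_set_of (P - \<Union>F) = P - \<Union>F"
    using assms(1,4,5) unfolding perfect_set_def
    by (intro derived_set_of_self_if_dense_in_perfect[of P D]) auto
  show "P - \<Union>F \<noteq> {}"
    using assms(4-6) by (metis closure_empty subset_empty)
qed

theorem lemma3p4:
  fixes P C :: "'a :: {ab_group_add, topological_group_add, polish_space} set"
  assumes "perfect_set P" and "P \<noteq> {}"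
    and "comeager C"
  shows "\<exists>g. C \<inter> ((\<lambda>p. g + p) ` P) \<approx> (UNIV :: real set)"
proof -
  obtain F where F: "countable F" "\<And>N. N \<in> F \<Longrightarrow> closed N \<and> nowhere_dense N" "- C \<subseteq> \<Union>F"
    using meager_imp_closed_nowhere_dense_cover assms(3) unfolding comeager_def by blast
  obtain D where D: "countable D" "D \<subseteq> P" "P \<subseteq> closure D"
    by (rule countable_dense_subset)
  have "\<Union>((\<lambda>(d, N). (\<lambda>x. x + d) -` N) ` (D \<times> F)) \<noteq> UNIV"
    using D(1) F(1) by (intro Union_closed_nowhere_dense_neq_UNIV)
      (auto intro!: closed_nowhere_dense_translation_vimage dest: F(2))
  then obtain g where g: "\<And>d N. d \<in> D \<Longrightarrow> N \<in> F \<Longrightarrow> g + d \<notin> N"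
    by blast
  define S where "S = P - \<Union>((\<lambda>N. (\<lambda>p. g + p) -` N) ` F)"
  have "closed ((\<lambda>p. g + p) -` N)" if "N \<in> F" for N
    using F(2)[OF that] by (intro continuous_closed_vimage continuous_intros) auto
  moreover have "D \<subseteq> S"
    using D(2) g by (auto simp: S_def)
  ultimately have "(UNIV :: real set) \<lesssim> S"
    unfolding S_def using F(1)
    by (intro real_lepoll_perfect_set_Diff_Union_closed[OF assms(1) _ _ _ D(3) assms(2)]) auto
  also have "S \<lesssim> C \<inter> ((\<lambda>p. g + p) ` P)"
  proof -
    have "(\<lambda>p. g + p) ` S \<subseteq> C \<inter> ((\<lambda>p. g + p) ` P)"
      using F(3) by (auto simp: S_def)
    then show ?thesis
      unfolding lepoll_def by (intro exI[of _ "\<lambda>p. g + p"]) (simp add: inj_on_def)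
  qed
  finally have "(UNIV :: real set) \<lesssim> C \<inter> ((\<lambda>p. g + p) ` P)" .
  moreover have "C \<inter> ((\<lambda>p. g + p) ` P) \<lesssim> (UNIV :: real set)"
    by (rule lepoll_trans[OF subset_imp_lepoll UNIV_lepoll_real_if_second_countable]) simp
  ultimately show ?thesis
    using lepoll_antisym by blast
qed

end
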